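(* Let $a<b$ and let $f:[a,b]\rightarrow\mathbb{R}$ be a twice continuously differentiable mapping in $(a,b)$ with $f''\in L^2[a,b]$. Assume additionally that $f(a+b-x)=f(x)$ for all $x\in[a,b]$. Then for all $x\in[a,\frac{a+b}{2}]$, \[ \left|f(x)-\frac{1}{b-a}\int_{a}^{b}f(t)\,dt\right|\leq \frac{(b-a)^{1/2}}{\pi}\left[\frac{(b-a)^2}{48}+\left(x-\frac{3a+b}{4}\right)^2\right]^{1/2}\|f''\|_2. \]
   Context: $\|g\|_2=\left(\int_a^b g(t)^2\,dt\right)^{1/2}$. *)

theory Defs
  imports "HOL-Analysis.Analysis"
begin

definition l2norm :: "real \<Rightarrow> real \<Rightarrow> (real \<Rightarrow> real) \<Rightarrow> real" where
  "l2norm a b g = sqrt (integral {a..b} (\<lambda>t. (g t)\<^sup>2))"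

end

(* For the two-point rule, (b - a) * ((f x + f (a + b - x)) / 2 - mean of f) is the integral of
   K * f', where the Peano kernel K has slope 1 and jumps at x and a + b - x; its square integrates to
   (b - a) * ((b - a)^2 / 48 + (x - (3a + b) / 4)^2), so Cauchy-Schwarz bounds the deviation by that
   quantity times the L2 norm of f'.  Symmetry of f forces f' to vanish at the midpoint, and
   Wirtinger's inequality on each half then gives ||f'||_2 <= (b - a) / pi * ||f''||_2.  For
   symmetric f the two-point rule is f x itself. *)

theory Submission imports Defs begin

lemma Wirtinger_below_quarter_wave:
  fixes g g' :: "real \<Rightarrow> real"
  assumes uv: "u < v" and c: "0 < c" "c * (v - u) < pi / 2"
    and g_cont: "continuous_on {u..v} g"
    and g_deriv: "\<And>t. t \<in> {u<..<v} \<Longrightarrow> (g has_real_derivative g' t) (at t)"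
    and g_u: "g u = 0"
    and g'_sq_int: "(\<lambda>t. (g' t)\<^sup>2) integrable_on {u..v}"
  shows "c\<^sup>2 * integral {u..v} (\<lambda>t. (g t)\<^sup>2) \<le> integral {u..v} (\<lambda>t. (g' t)\<^sup>2)"
proof -
  define \<theta> where "\<theta> t = c * (t - u) + (pi / 2 - c * (v - u))" for t
  have sin_pos: "sin (\<theta> t) > 0" if "t \<in> {u..v}" for t
  proof -
    have "0 \<le> c * (t - u)" "c * (t - u) \<le> c * (v - u)"
      using that c by (auto intro: mult_left_mono)
    then show ?thesis using c pi_gt_zero unfolding \<theta>_def by (intro sin_gt_zero) linarith+
  qed
  \<comment> \<open>The multiplier c cot \<theta> solves the Riccati equation y' = -c^2 - y^2 and vanishes at v, so the
      boundary term G drops out at both ends and the defect below is a perfect square.\<close>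
  define G where "G t = (g t)\<^sup>2 * (c * cos (\<theta> t) / sin (\<theta> t))" for t
  define G' where
    "G' t = 2 * g t * g' t * (c * cos (\<theta> t) / sin (\<theta> t)) - c\<^sup>2 * (g t)\<^sup>2 / (sin (\<theta> t))\<^sup>2" for t
  have G_deriv: "(G has_real_derivative G' t) (at t)" if t: "t \<in> {u<..<v}" for t
  proof -
    have "sin (\<theta> t) \<noteq> 0" using sin_pos[of t] t by auto
    moreover have "(\<theta> has_real_derivative c) (at t)"
      unfolding \<theta>_def by (auto intro!: derivative_eq_intros)
    ultimately show ?thesis
      unfolding G_def G'_def
      by (auto intro!: derivative_eq_intros g_deriv[OF t] simp: power2_eq_square field_simps)
        (simp add: distrib_left[symmetric])
  qed
  have "(G' has_integral (G v - G u)) {u..v}"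
  proof (rule fundamental_theorem_of_calculus_interior)
    have "continuous_on {u..v} \<theta>" unfolding \<theta>_def by (intro continuous_intros)
    then show "continuous_on {u..v} G"
      unfolding G_def using sin_pos by (intro continuous_intros g_cont) force+
  qed (use uv G_deriv in \<open>auto simp: has_real_derivative_iff_has_vector_derivative\<close>)
  moreover have "G u = 0" "G v = 0" by (simp_all add: G_def g_u \<theta>_def)
  ultimately have "(G' has_integral 0) {u..v}" by simp
  moreover have "(\<lambda>t. (g t)\<^sup>2) integrable_on {u..v}"
    by (intro integrable_continuous_interval continuous_intros g_cont)
  ultimately have defect: "((\<lambda>t. (g' t)\<^sup>2 - c\<^sup>2 * (g t)\<^sup>2 - G' t) has_integral
      (integral {u..v} (\<lambda>t. (g' t)\<^sup>2) - c\<^sup>2 * integral {u..v} (\<lambda>t. (g t)\<^sup>2) - 0)) {u..v}"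
    by (intro has_integral_diff has_integral_mult_right integrable_integral g'_sq_int)
  have "0 \<le> integral {u..v} (\<lambda>t. (g' t)\<^sup>2) - c\<^sup>2 * integral {u..v} (\<lambda>t. (g t)\<^sup>2) - 0"
  proof (rule has_integral_nonneg[OF defect])
    fix t assume "t \<in> {u..v}"
    then have s: "sin (\<theta> t) \<noteq> 0" using sin_pos by fastforce
    have "(g' t)\<^sup>2 - c\<^sup>2 * (g t)\<^sup>2 - G' t
        = (g' t - c * g t * cos (\<theta> t) / sin (\<theta> t))\<^sup>2"
      using s by (simp add: G'_def field_simps power2_eq_square) (simp add: distrib_left[symmetric])
    then show "0 \<le> (g' t)\<^sup>2 - c\<^sup>2 * (g t)\<^sup>2 - G' t" by simp
  qed
  then show ?thesis by simp
qed

lemma Wirtinger_vanishing_at_left: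
  fixes g g' :: "real \<Rightarrow> real"
  assumes uv: "u < v"
    and g_cont: "continuous_on {u..v} g"
    and g_deriv: "\<And>t. t \<in> {u<..<v} \<Longrightarrow> (g has_real_derivative g' t) (at t)"
    and g_u: "g u = 0"
    and g'_sq_int: "(\<lambda>t. (g' t)\<^sup>2) integrable_on {u..v}"
  shows "(pi / (2 * (v - u)))\<^sup>2 * integral {u..v} (\<lambda>t. (g t)\<^sup>2)
    \<le> integral {u..v} (\<lambda>t. (g' t)\<^sup>2)"
\<comment> \<open>At c = pi / (2 * (v - u)) the cotangent multiplier blows up at u, so the sharp constant is
    only reached as a limit from below.\<close>
proof (rule field_le_mult_one_interval)
  fix z :: real assume z: "0 < z" "z < 1"
  define c where "c = sqrt z * (pi / (2 * (v - u)))"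
  have "c * (v - u) = sqrt z * (pi / 2)" using uv by (simp add: c_def field_simps)
  also have "\<dots> < pi / 2" using z by simp
  finally have "c\<^sup>2 * integral {u..v} (\<lambda>t. (g t)\<^sup>2) \<le> integral {u..v} (\<lambda>t. (g' t)\<^sup>2)"
    using z uv by (intro Wirtinger_below_quarter_wave[OF uv _ _ g_cont g_deriv g_u g'_sq_int])
      (auto simp: c_def)
  moreover have "c\<^sup>2 = z * (pi / (2 * (v - u)))\<^sup>2"
    using z unfolding c_def power_mult_distrib by simp
  ultimately show "z * ((pi / (2 * (v - u)))\<^sup>2 * integral {u..v} (\<lambda>t. (g t)\<^sup>2))
      \<le> integral {u..v} (\<lambda>t. (g' t)\<^sup>2)"
    by (simp add: mult.assoc)
qed

lemma Wirtinger_vanishing_at_right: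
  fixes g g' :: "real \<Rightarrow> real"
  assumes uv: "u < v"
    and g_cont: "continuous_on {u..v} g"
    and g_deriv: "\<And>t. t \<in> {u<..<v} \<Longrightarrow> (g has_real_derivative g' t) (at t)"
    and g_v: "g v = 0"
    and g'_sq_int: "(\<lambda>t. (g' t)\<^sup>2) integrable_on {u..v}"
  shows "(pi / (2 * (v - u)))\<^sup>2 * integral {u..v} (\<lambda>t. (g t)\<^sup>2)
    \<le> integral {u..v} (\<lambda>t. (g' t)\<^sup>2)"
proof -
  have "(pi / (2 * (-u - -v)))\<^sup>2 * integral {-v..-u} (\<lambda>t. (g (-t))\<^sup>2)
      \<le> integral {-v..-u} (\<lambda>t. (- g' (-t))\<^sup>2)"
  proof (rule Wirtinger_vanishing_at_left)
    show "continuous_on {-v..-u} (\<lambda>t. g (-t))"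
      by (intro continuous_on_compose2[OF g_cont] continuous_intros) auto
    fix t assume "t \<in> {-v<..<-u}"
    then have "-t \<in> {u<..<v}" by auto
    from DERIV_chain2[where g = uminus and x = t, OF g_deriv[OF this] DERIV_minus[OF DERIV_ident]]
    show "((\<lambda>t. g (-t)) has_real_derivative - g' (-t)) (at t)" by simp
  qed (use uv g_v g'_sq_int Henstock_Kurzweil_Integration.integrable_reflect_real[where
      f = "\<lambda>t. (g' t)\<^sup>2" and a = u and b = v] in auto)
  then show ?thesis
    using Henstock_Kurzweil_Integration.integral_reflect_real[where f = "\<lambda>t. (g t)\<^sup>2" and a = u and b = v]
      Henstock_Kurzweil_Integration.integral_reflect_real[where f = "\<lambda>t. (g' t)\<^sup>2" and a = u and b = v]
    by simp
qed

lemma Wirtinger_vanishing_at_midpoint: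
  fixes g g' :: "real \<Rightarrow> real"
  assumes ab: "a < b"
    and g_cont: "continuous_on {a..b} g"
    and g_deriv: "\<And>t. t \<in> {a<..<b} \<Longrightarrow> (g has_real_derivative g' t) (at t)"
    and g_mid: "g ((a + b) / 2) = 0"
    and g'_sq_int: "(\<lambda>t. (g' t)\<^sup>2) integrable_on {a..b}"
  shows "(pi / (b - a))\<^sup>2 * integral {a..b} (\<lambda>t. (g t)\<^sup>2) \<le> integral {a..b} (\<lambda>t. (g' t)\<^sup>2)"
proof -
  define m where "m = (a + b) / 2"
  have m: "a < m" "m < b" "2 * (m - a) = b - a" "2 * (b - m) = b - a"
    using ab by (simp_all add: m_def field_simps)
  have g_m: "g m = 0" using g_mid by (simp add: m_def)
  have halves: "{a..m} \<subseteq> {a..b}" "{m..b} \<subseteq> {a..b}" using m by auto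
  have g_sq_int: "(\<lambda>t. (g t)\<^sup>2) integrable_on {a..b}"
    by (intro integrable_continuous_interval continuous_intros g_cont)
  have left: "(pi / (b - a))\<^sup>2 * integral {a..m} (\<lambda>t. (g t)\<^sup>2) \<le> integral {a..m} (\<lambda>t. (g' t)\<^sup>2)"
    using m g_deriv
    by (intro Wirtinger_vanishing_at_right[of a m g g', unfolded m(3)] g_m
        continuous_on_subset[OF g_cont halves(1)] integrable_on_subinterval[OF g'_sq_int halves(1)]) auto
  have right: "(pi / (b - a))\<^sup>2 * integral {m..b} (\<lambda>t. (g t)\<^sup>2) \<le> integral {m..b} (\<lambda>t. (g' t)\<^sup>2)"
    using m g_deriv
    by (intro Wirtinger_vanishing_at_left[of m b g g', unfolded m(4)] g_m
        continuous_on_subset[OF g_cont halves(2)] integrable_on_subinterval[OF g'_sq_int halves(2)]) auto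
  have split: "integral {a..m} h + integral {m..b} h = integral {a..b} h"
    if "h integrable_on {a..b}" for h :: "real \<Rightarrow> real"
    using m that by (intro Henstock_Kurzweil_Integration.integral_combine) (auto intro: integrable_on_subinterval)
  show ?thesis
    unfolding split[OF g_sq_int, symmetric] split[OF g'_sq_int, symmetric] distrib_left
    using add_mono[OF left right] .
qed

lemma has_integral_Cauchy_Schwarz:
  fixes f g :: "'a::euclidean_space \<Rightarrow> real"
  assumes fg: "((\<lambda>t. f t * g t) has_integral I) S"
    and ff: "((\<lambda>t. (f t)\<^sup>2) has_integral A) S"
    and gg: "((\<lambda>t. (g t)\<^sup>2) has_integral B) S"
  shows "I\<^sup>2 \<le> A * B"
proof -
  have quadratic_nonneg: "0 \<le> A * s\<^sup>2 + 2 * I * s + B" for s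
  proof (rule has_integral_nonneg)
    show "((\<lambda>t. (s * f t + g t)\<^sup>2) has_integral A * s\<^sup>2 + 2 * I * s + B) S"
      using has_integral_add[OF has_integral_add[OF has_integral_mult_left[OF ff, of "s\<^sup>2"]
          has_integral_mult_left[OF fg, of "2 * s"]] gg]
      by (simp add: power2_sum power_mult_distrib algebra_simps)
  qed simp
  have "0 \<le> A" by (rule has_integral_nonneg[OF ff]) simp
  then consider "A = 0" | "A > 0" by linarith
  then show ?thesis
  proof cases
    case 1
    have "I = 0"
    proof (rule ccontr)
      assume "I \<noteq> 0"
      then show False using quadratic_nonneg[of "- (B + 1) / (2 * I)"] 1 by (simp add: field_simps)
    qed
    then show ?thesis using 1 by simp
  next
    case 2
    then show ?thesis using quadratic_nonneg[of "- I / A"] by (simp add: field_simps power2_eq_square)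
  qed
qed

lemma integral_square_nonneg: "0 \<le> integral S (\<lambda>t. (g t)\<^sup>2 :: real)"
  by (cases "(\<lambda>t. (g t)\<^sup>2) integrable_on S") (simp_all add: integral_nonneg not_integrable_integral)

lemma l2norm_nonneg: "0 \<le> l2norm a b g"
  by (simp add: l2norm_def integral_square_nonneg)

lemma l2norm_power2: "(l2norm a b g)\<^sup>2 = integral {a..b} (\<lambda>t. (g t)\<^sup>2)"
  by (simp add: l2norm_def integral_square_nonneg)

lemma has_integral_shifted_times_derivative:
  fixes f f' :: "real \<Rightarrow> real"
  assumes pr: "p \<le> r" and cont: "continuous_on {p..r} f"
    and deriv: "\<And>t. t \<in> {p<..<r} \<Longrightarrow> (f has_real_derivative f' t) (at t)"
  shows "((\<lambda>t. (t - c) * f' t) has_integral (r - c) * f r - (p - c) * f p - integral {p..r} f) {p..r}"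
proof -
  have "((\<lambda>t. f t + (t - c) * f' t) has_integral (r - c) * f r - (p - c) * f p) {p..r}"
  proof (rule fundamental_theorem_of_calculus_interior[OF pr])
    show "continuous_on {p..r} (\<lambda>t. (t - c) * f t)" by (intro continuous_intros cont)
    fix t assume "t \<in> {p<..<r}"
    then have "((\<lambda>t. (t - c) * f t) has_real_derivative f t + (t - c) * f' t) (at t)"
      by (auto intro!: derivative_eq_intros deriv)
    then show "((\<lambda>t. (t - c) * f t) has_vector_derivative f t + (t - c) * f' t) (at t)"
      by (simp add: has_real_derivative_iff_has_vector_derivative)
  qed
  moreover have "(f has_integral integral {p..r} f) {p..r}"
    using cont by (intro integrable_integral integrable_continuous_interval)
  ultimately have "((\<lambda>t. (f t + (t - c) * f' t) - f t) has_integral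
      (r - c) * f r - (p - c) * f p - integral {p..r} f) {p..r}"
    by (rule has_integral_diff)
  then show ?thesis by simp
qed

lemma has_integral_shifted_square:
  fixes p r c :: real
  assumes "p \<le> r"
  shows "((\<lambda>t. (t - c)\<^sup>2) has_integral ((r - c) ^ 3 - (p - c) ^ 3) / 3) {p..r}"
proof -
  have "((\<lambda>t. (t - c)\<^sup>2) has_integral (r - c) ^ 3 / 3 - (p - c) ^ 3 / 3) {p..r}"
  proof (rule fundamental_theorem_of_calculus_interior[OF assms])
    show "continuous_on {p..r} (\<lambda>t. (t - c) ^ 3 / 3)" by (intro continuous_intros) auto
    fix t
    have "((\<lambda>t. (t - c) ^ 3 / 3) has_real_derivative (t - c)\<^sup>2) (at t)"
      by (auto intro!: derivative_eq_intros simp: power2_eq_square)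
    then show "((\<lambda>t. (t - c) ^ 3 / 3) has_vector_derivative (t - c)\<^sup>2) (at t)"
      by (simp add: has_real_derivative_iff_has_vector_derivative)
  qed
  then show ?thesis by (simp add: diff_divide_distrib)
qed

lemma square_integrable_imp_integrable:
  fixes h :: "real \<Rightarrow> real"
  assumes cont: "continuous_on {a<..<b} h"
    and sq_int: "(\<lambda>t. (h t)\<^sup>2) integrable_on {a..b}"
  shows "h integrable_on {a..b}"
proof -
  have meas: "h \<in> borel_measurable (lebesgue_on {a<..<b})"
    by (rule continuous_imp_measurable_on_sets_lebesgue[OF cont]) auto
  have dominant: "(\<lambda>t. (1 + (h t)\<^sup>2) / 2) integrable_on {a<..<b}"
    using sq_int
    by (simp add: integrable_on_open_interval_real integrable_on_divide integrable_add integrable_const_ivl)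
  have bound: "\<bar>h t\<bar> \<le> (1 + (h t)\<^sup>2) / 2" for t
  proof -
    have "0 \<le> (\<bar>h t\<bar> - 1)\<^sup>2" by simp
    then show ?thesis by (simp add: power2_eq_square algebra_simps)
  qed
  have "h integrable_on {a<..<b}"
    by (rule measurable_bounded_by_integrable_imp_integrable_real[OF meas dominant]) (use bound in auto)
  then show ?thesis by (simp add: integrable_on_open_interval_real)
qed

lemma derivative_integrable_imp_continuous_extension:
  fixes F F' :: "real \<Rightarrow> real"
  assumes ab: "a < b"
    and deriv: "\<And>t. t \<in> {a<..<b} \<Longrightarrow> (F has_real_derivative F' t) (at t)"
    and F'_int: "F' integrable_on {a..b}"
  obtains G where "continuous_on {a..b} G" "\<And>t. t \<in> {a<..<b} \<Longrightarrow> G t = F t"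
proof
  define m where "m = (a + b) / 2"
  have m: "m \<in> {a<..<b}" using ab by (simp add: m_def)
  show "continuous_on {a..b} (\<lambda>t. F m + integral {a..t} F' - integral {a..m} F')"
    by (intro continuous_intros indefinite_integral_continuous_1 F'_int)
  have F'_int_sub: "F' integrable_on {p..r}" if "a \<le> p" "r \<le> b" for p r
    using that by (intro integrable_subinterval_real[OF F'_int]) auto
  have ftc: "integral {p..r} F' = F r - F p" if "a < p" "p \<le> r" "r < b" for p r
  proof (rule integral_unique, rule fundamental_theorem_of_calculus[OF \<open>p \<le> r\<close>])
    fix y assume "y \<in> {p..r}"
    with that have "y \<in> {a<..<b}" by auto
    from deriv[OF this] show "(F has_vector_derivative F' y) (at y within {p..r})"
      by (simp add: has_real_derivative_iff_has_vector_derivative[symmetric] has_field_derivative_at_within)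
  qed
  fix t assume t: "t \<in> {a<..<b}"
  show "F m + integral {a..t} F' - integral {a..m} F' = F t"
  proof (cases "m \<le> t")
    case True
    then have "integral {a..m} F' + integral {m..t} F' = integral {a..t} F'"
      using m t by (intro Henstock_Kurzweil_Integration.integral_combine F'_int_sub) auto
    with ftc[of m t] True m t show ?thesis by simp
  next
    case False
    then have "integral {a..t} F' + integral {t..m} F' = integral {a..m} F'"
      using m t by (intro Henstock_Kurzweil_Integration.integral_combine F'_int_sub) auto
    with ftc[of t m] False m t show ?thesis by simp
  qed
qed

lemma symmetric_deriv_midpoint_eq_0:
  fixes f :: "real \<Rightarrow> real"
  assumes ab: "a < b"
    and sym: "\<And>x. x \<in> {a..b} \<Longrightarrow> f (a + b - x) = f x"
    and deriv: "(f has_real_derivative D) (at ((a + b) / 2))"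
  shows "D = 0"
proof -
  define m where "m = (a + b) / 2"
  have m: "m \<in> {a<..<b}" "a + b - m = m" using ab by (simp_all add: m_def field_simps)
  have "(f has_real_derivative D) (at (a + b - m))" unfolding m(2) using deriv by (simp add: m_def)
  moreover have "((\<lambda>y. a + b - y) has_real_derivative -1) (at m)"
    by (auto intro!: derivative_eq_intros)
  ultimately have "((\<lambda>y. f (a + b - y)) has_real_derivative D * -1) (at m)"
    by (rule DERIV_chain2)
  moreover have "((\<lambda>y. f (a + b - y)) has_real_derivative D) (at m)"
    by (rule has_field_derivative_transform_within_open[of f _ _ "{a<..<b}"])
      (use deriv m sym in \<open>auto simp: m_def\<close>)
  ultimately show ?thesis using DERIV_unique by fastforce
qed

definition two_point_kernel :: "real \<Rightarrow> real \<Rightarrow> real \<Rightarrow> real \<Rightarrow> real" where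
  "two_point_kernel a b x t =
    (if t \<le> x then t - a else if t < a + b - x then t - (a + b) / 2 else t - b)"

lemma has_integral_two_point_kernel_split:
  fixes H :: "real \<Rightarrow> real \<Rightarrow> real"
  assumes x: "a \<le> x" "x \<le> (a + b) / 2"
    and left: "((\<lambda>t. H (t - a) t) has_integral I\<^sub>1) {a..x}"
    and middle: "((\<lambda>t. H (t - (a + b) / 2) t) has_integral I\<^sub>2) {x..a + b - x}"
    and right: "((\<lambda>t. H (t - b) t) has_integral I\<^sub>3) {a + b - x..b}"
  shows "((\<lambda>t. H (two_point_kernel a b x t) t) has_integral I\<^sub>1 + I\<^sub>2 + I\<^sub>3) {a..b}"
proof -
  let ?h = "\<lambda>t. H (two_point_kernel a b x t) t"
  have "(?h has_integral I\<^sub>1) {a..x}"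
    by (rule has_integral_eq[OF _ left]) (auto simp: two_point_kernel_def)
  moreover have "(?h has_integral I\<^sub>2) {x..a + b - x}"
    by (rule has_integral_spike_finite[OF _ _ middle, of "{x, a + b - x}"])
      (auto simp: two_point_kernel_def)
  moreover have "(?h has_integral I\<^sub>3) {a + b - x..b}"
    by (rule has_integral_spike_finite[OF _ _ right, of "{a + b - x}"])
      (use x in \<open>auto simp: two_point_kernel_def\<close>)
  ultimately show ?thesis
    using x by (intro has_integral_combine[of _ "a + b - x"] has_integral_combine[of _ x]) auto
qed

lemma two_point_kernel_identity:
  fixes f f' :: "real \<Rightarrow> real"
  assumes x: "a \<le> x" "x \<le> (a + b) / 2"
    and cont: "continuous_on {a..b} f"
    and deriv: "\<And>t. t \<in> {a<..<b} \<Longrightarrow> (f has_real_derivative f' t) (at t)"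
  shows "((\<lambda>t. two_point_kernel a b x t * f' t) has_integral
      (b - a) / 2 * (f x + f (a + b - x)) - integral {a..b} f) {a..b}"
proof -
  have xy: "a \<le> x" "x \<le> a + b - x" "a + b - x \<le> b" using x by auto
  have piece: "((\<lambda>t. (t - c) * f' t) has_integral (r - c) * f r - (p - c) * f p - integral {p..r} f) {p..r}"
    if "a \<le> p" "p \<le> r" "r \<le> b" for p r c
    using that by (intro has_integral_shifted_times_derivative continuous_on_subset[OF cont] deriv) auto
  have split: "((\<lambda>t. two_point_kernel a b x t * f' t) has_integral
      ((x - a) * f x - (a - a) * f a - integral {a..x} f)
      + ((a + b - x - (a + b) / 2) * f (a + b - x) - (x - (a + b) / 2) * f x - integral {x..a + b - x} f)
      + ((b - b) * f b - (a + b - x - b) * f (a + b - x) - integral {a + b - x..b} f)) {a..b}"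
    (is "(_ has_integral ?I) _")
    using xy by (intro has_integral_two_point_kernel_split[where H = "\<lambda>k t. k * f' t"] x piece) auto
  have combine: "integral {a..x} f + integral {x..a + b - x} f = integral {a..a + b - x} f"
    "integral {a..a + b - x} f + integral {a + b - x..b} f = integral {a..b} f"
    using xy cont by (auto intro!: Henstock_Kurzweil_Integration.integral_combine
        integrable_continuous_interval intro: continuous_on_subset)
  have "?I = (b - a) / 2 * (f x + f (a + b - x)) - integral {a..b} f"
    unfolding combine(2)[symmetric] combine(1)[symmetric] by (simp add: field_simps)
  with split show ?thesis by simp
qed

lemma two_point_kernel_square_integral:
  assumes x: "a \<le> x" "x \<le> (a + b) / 2"
  shows "((\<lambda>t. (two_point_kernel a b x t)\<^sup>2) has_integral
      (b - a) * ((b - a)\<^sup>2 / 48 + (x - (3 * a + b) / 4)\<^sup>2)) {a..b}"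
proof -
  have "((\<lambda>t. (two_point_kernel a b x t)\<^sup>2) has_integral
      ((x - a) ^ 3 - (a - a) ^ 3) / 3 + (((a + b - x) - (a + b) / 2) ^ 3 - (x - (a + b) / 2) ^ 3) / 3
      + ((b - b) ^ 3 - ((a + b - x) - b) ^ 3) / 3) {a..b}"
    using x by (intro has_integral_two_point_kernel_split[where H = "\<lambda>k t. k\<^sup>2"] has_integral_shifted_square)
      auto
  moreover have "((x - a) ^ 3 - (a - a) ^ 3) / 3 + (((a + b - x) - (a + b) / 2) ^ 3 - (x - (a + b) / 2) ^ 3) / 3
      + ((b - b) ^ 3 - ((a + b - x) - b) ^ 3) / 3 = (b - a) * ((b - a)\<^sup>2 / 48 + (x - (3 * a + b) / 4)\<^sup>2)"
    by (simp add: field_simps power2_eq_square power3_eq_cube)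
  ultimately show ?thesis by simp
qed

lemma two_point_deviation_bound:
  fixes f g g' :: "real \<Rightarrow> real"
  assumes ab: "a < b" and x: "x \<in> {a..(a + b) / 2}"
    and f_cont: "continuous_on {a..b} f"
    and f_deriv: "\<And>t. t \<in> {a<..<b} \<Longrightarrow> (f has_real_derivative g t) (at t)"
    and g_cont: "continuous_on {a..b} g"
    and g_deriv: "\<And>t. t \<in> {a<..<b} \<Longrightarrow> (g has_real_derivative g' t) (at t)"
    and g_mid: "g ((a + b) / 2) = 0"
    and g'_sq_int: "(\<lambda>t. (g' t)\<^sup>2) integrable_on {a..b}"
  shows "\<bar>(f x + f (a + b - x)) / 2 - integral {a..b} f / (b - a)\<bar>
    \<le> sqrt (b - a) / pi * sqrt ((b - a)\<^sup>2 / 48 + (x - (3 * a + b) / 4)\<^sup>2) * l2norm a b g'"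
proof -
  define Q where "Q = (b - a)\<^sup>2 / 48 + (x - (3 * a + b) / 4)\<^sup>2"
  define I where "I = (b - a) / 2 * (f x + f (a + b - x)) - integral {a..b} f"
  define N where "N = l2norm a b g'"
  have Wirtinger: "(pi / (b - a))\<^sup>2 * integral {a..b} (\<lambda>t. (g t)\<^sup>2) \<le> N\<^sup>2"
    using Wirtinger_vanishing_at_midpoint[OF ab g_cont g_deriv g_mid g'_sq_int]
    by (simp add: N_def l2norm_power2)
  have "I\<^sup>2 \<le> ((b - a) * Q) * integral {a..b} (\<lambda>t. (g t)\<^sup>2)"
  proof (rule has_integral_Cauchy_Schwarz)
    show "((\<lambda>t. two_point_kernel a b x t * g t) has_integral I) {a..b}"
      unfolding I_def using x f_cont f_deriv by (intro two_point_kernel_identity) auto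
    show "((\<lambda>t. (two_point_kernel a b x t)\<^sup>2) has_integral (b - a) * Q) {a..b}"
      unfolding Q_def using x by (intro two_point_kernel_square_integral) auto
    show "((\<lambda>t. (g t)\<^sup>2) has_integral integral {a..b} (\<lambda>t. (g t)\<^sup>2)) {a..b}"
      by (intro integrable_integral integrable_continuous_interval continuous_intros g_cont)
  qed
  also have "\<dots> \<le> ((b - a) * Q) * ((b - a) / pi * N)\<^sup>2"
  proof (rule mult_left_mono)
    have "integral {a..b} (\<lambda>t. (g t)\<^sup>2)
        = ((b - a) / pi)\<^sup>2 * ((pi / (b - a))\<^sup>2 * integral {a..b} (\<lambda>t. (g t)\<^sup>2))"
      using ab by (simp add: power_divide)
    also have "\<dots> \<le> ((b - a) / pi)\<^sup>2 * N\<^sup>2"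
      using Wirtinger by (rule mult_left_mono) simp
    finally show "integral {a..b} (\<lambda>t. (g t)\<^sup>2) \<le> ((b - a) / pi * N)\<^sup>2"
      by (simp only: power_mult_distrib)
    show "0 \<le> (b - a) * Q" using ab by (simp add: Q_def)
  qed
  finally have I_sq: "I\<^sup>2 \<le> ((b - a) * Q) * ((b - a) / pi * N)\<^sup>2" .
  have "\<bar>(f x + f (a + b - x)) / 2 - integral {a..b} f / (b - a)\<bar> = \<bar>I\<bar> / (b - a)"
    using ab by (simp add: I_def field_simps)
  also have "\<dots> = sqrt (I\<^sup>2) / (b - a)" by simp
  also have "\<dots> \<le> sqrt (((b - a) * Q) * ((b - a) / pi * N)\<^sup>2) / (b - a)"
    using I_sq ab by (intro divide_right_mono real_sqrt_le_mono) auto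
  also have "\<dots> = sqrt (b - a) / pi * sqrt Q * N"
    using ab l2norm_nonneg[of a b g'] by (simp add: N_def real_sqrt_mult abs_mult)
  finally show ?thesis by (simp add: Q_def N_def)
qed

theorem corollary2p8:
  fixes f f' f'' :: "real \<Rightarrow> real" and a b :: real
  assumes ab: "a < b"
    and cont: "continuous_on {a..b} f"
    and d1: "\<And>x. x \<in> {a<..<b} \<Longrightarrow> (f has_real_derivative f' x) (at x)"
    and d2: "\<And>x. x \<in> {a<..<b} \<Longrightarrow> (f' has_real_derivative f'' x) (at x)"
    and cont2: "continuous_on {a<..<b} f''"
    and L2: "(\<lambda>t. (f'' t)\<^sup>2) integrable_on {a..b}"
    and sym: "\<And>x. x \<in> {a..b} \<Longrightarrow> f (a + b - x) = f x"
  shows "\<forall>x \<in> {a..(a+b)/2}.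
    \<bar>f x - (1 / (b - a)) * integral {a..b} f\<bar>
      \<le> sqrt (b - a) / pi * sqrt ((b - a)\<^sup>2 / 48 + (x - (3*a + b)/4)\<^sup>2) * l2norm a b f''"
proof
  fix x assume x: "x \<in> {a..(a+b)/2}"
  obtain g where g_cont: "continuous_on {a..b} g" and g_eq: "\<And>t. t \<in> {a<..<b} \<Longrightarrow> g t = f' t"
    using derivative_integrable_imp_continuous_extension[OF ab d2
        square_integrable_imp_integrable[OF cont2 L2]] by blast
  have f_deriv: "(f has_real_derivative g t) (at t)" if "t \<in> {a<..<b}" for t
    using d1[OF that] g_eq[OF that] by simp
  have g_deriv: "(g has_real_derivative f'' t) (at t)" if "t \<in> {a<..<b}" for t
    by (rule has_field_derivative_transform_within_open[OF d2[OF that] _ that]) (auto simp: g_eq)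
  have mid: "(a + b) / 2 \<in> {a<..<b}" using ab by auto
  have "f' ((a + b) / 2) = 0"
    by (rule symmetric_deriv_midpoint_eq_0[of a b f, OF ab sym d1[OF mid]])
  then have "g ((a + b) / 2) = 0" using g_eq[OF mid] by simp
  from two_point_deviation_bound[OF ab x cont f_deriv g_cont g_deriv this L2]
  show "\<bar>f x - (1 / (b - a)) * integral {a..b} f\<bar>
      \<le> sqrt (b - a) / pi * sqrt ((b - a)\<^sup>2 / 48 + (x - (3*a + b)/4)\<^sup>2) * l2norm a b f''"
    using sym[of x] x ab by simp
qed

end
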